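(* Let $R$ be a $*$-ring. Then $R$ is strongly $J$-$*$-clean if and only if (1) $R$ is strongly $*$-clean, and (2) $J(R)=\{x\in R \mid 1-x\in U(R)\}$.
   Context: All rings are associative with identity. A $*$-ring is a ring $R$ with an involution $*$, i.e. a map $a\mapsto a^*$ with $(a+b)^*=a^*+b^*$, $(ab)^*=b^*a^*$, $(a^* )^*=a$. $U(R)$ denotes the group of units and $J(R)$ the Jacobson radical of $R$. A projection is an element $e$ with $e^2=e=e^*$. $R$ is strongly $J$-$*$-clean if every $a\in R$ can be written $a=e+u$ with $e$ a projection, $u\in J(R)$ and $ae=ea$. $R$ is strongly $*$-clean if every $a\in R$ can be written $a=e+u$ with $e$ a projection, $u\in U(R)$ and $eu=ue$. *)

theory Defs
  imports Main
begin

text \<open>A *-ring: a ring (type class ring_1, associative with identity) together with an involution.\<close>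
definition involution :: "('a::ring_1 \<Rightarrow> 'a) \<Rightarrow> bool" where
  "involution st \<longleftrightarrow> (\<forall>a b. st (a + b) = st a + st b \<and> st (a * b) = st b * st a \<and> st (st a) = a)"

definition ring_unit :: "'a::ring_1 \<Rightarrow> bool" where
  "ring_unit a \<longleftrightarrow> (\<exists>b. a * b = 1 \<and> b * a = 1)"

definition left_ideal :: "'a::ring_1 set \<Rightarrow> bool" where
  "left_ideal I \<longleftrightarrow> 0 \<in> I \<and> (\<forall>x\<in>I. \<forall>y\<in>I. x + y \<in> I) \<and> (\<forall>x\<in>I. - x \<in> I) \<and> (\<forall>r. \<forall>x\<in>I. r * x \<in> I)"

definition maximal_left_ideal :: "'a::ring_1 set \<Rightarrow> bool" where
  "maximal_left_ideal I \<longleftrightarrow> left_ideal I \<and> I \<noteq> UNIV \<and>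
     (\<forall>K. left_ideal K \<and> I \<subseteq> K \<and> K \<noteq> UNIV \<longrightarrow> K = I)"

definition jacobson :: "'a::ring_1 set" where
  "jacobson = \<Inter> {I. maximal_left_ideal I}"

definition projection :: "('a::ring_1 \<Rightarrow> 'a) \<Rightarrow> 'a \<Rightarrow> bool" where
  "projection st e \<longleftrightarrow> e * e = e \<and> st e = e"

definition strongly_J_star_clean :: "('a::ring_1 \<Rightarrow> 'a) \<Rightarrow> bool" where
  "strongly_J_star_clean st \<longleftrightarrow>
     (\<forall>a. \<exists>e u. a = e + u \<and> projection st e \<and> u \<in> jacobson \<and> a * e = e * a)"

definition strongly_star_clean :: "('a::ring_1 \<Rightarrow> 'a) \<Rightarrow> bool" where
  "strongly_star_clean st \<longleftrightarrow>
     (\<forall>a. \<exists>e u. a = e + u \<and> projection st e \<and> ring_unit u \<and> e * u = u * e)"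

end

theory Submission
  imports Defs
begin

text \<open>
  Every element of the Jacobson radical is quasi-regular: if \<open>1 - j\<close> had no left inverse,
  the left ideal \<open>R(1 - j)\<close> would lie in a maximal left ideal \<open>M\<close> (Zorn), and \<open>j \<in> M\<close> would
  force \<open>1 \<in> M\<close>. Hence \<open>J(R) \<subseteq> {x. 1 - x \<in> U(R)}\<close> always, and units stay units modulo \<open>J(R)\<close>.

  For a strongly \<open>J\<close>-\<open>*\<close>-clean ring, decomposing \<open>a - 1 = e + u\<close> gives the strongly
  \<open>*\<close>-clean decomposition \<open>a = e + (1 + u)\<close>. If \<open>1 - x\<close> is a unit and \<open>x = e + u\<close>, then
  \<open>1 - e = (1 - x) + u\<close> is an idempotent unit, so \<open>e = 0\<close> and \<open>x = u \<in> J(R)\<close>.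

  Conversely, if \<open>J(R) = {x. 1 - x \<in> U(R)}\<close> then \<open>2 \<in> J(R)\<close> (as \<open>1 - 2 = -1\<close>) and
  \<open>1 - w \<in> J(R)\<close> for every unit \<open>w\<close>. So a strongly \<open>*\<close>-clean decomposition \<open>a = f + w\<close>
  yields \<open>a = (1 - f) + (2f - (1 - w))\<close> with the projection \<open>1 - f\<close> and \<open>2f - (1 - w) \<in> J(R)\<close>.
\<close>

lemma left_ideal_add: "left_ideal I \<Longrightarrow> x \<in> I \<Longrightarrow> y \<in> I \<Longrightarrow> x + y \<in> I"
  unfolding left_ideal_def by blast

lemma left_ideal_mult_left: "left_ideal I \<Longrightarrow> x \<in> I \<Longrightarrow> r * x \<in> I"
  unfolding left_ideal_def by blast

lemma left_ideal_diff: "left_ideal I \<Longrightarrow> x \<in> I \<Longrightarrow> y \<in> I \<Longrightarrow> x - y \<in> I"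
  unfolding left_ideal_def by (metis diff_conv_add_uminus)

lemma left_ideal_eq_UNIV_iff:
  fixes K :: "'a::ring_1 set"
  assumes "left_ideal K"
  shows "K = UNIV \<longleftrightarrow> 1 \<in> K"
  using left_ideal_mult_left[OF assms, of 1] by (metis UNIV_I UNIV_eq_I mult_1_right)

lemma left_ideal_Union_chain:
  fixes C :: "'a::ring_1 set set"
  assumes "C \<noteq> {}" and ideals: "\<And>X. X \<in> C \<Longrightarrow> left_ideal X"
    and chain: "\<And>X Y. X \<in> C \<Longrightarrow> Y \<in> C \<Longrightarrow> X \<subseteq> Y \<or> Y \<subseteq> X"
  shows "left_ideal (\<Union>C)"
  unfolding left_ideal_def
proof (intro conjI ballI allI)
  obtain X where "X \<in> C" using assms(1) by blast
  then show "0 \<in> \<Union>C" using ideals unfolding left_ideal_def by blast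
next
  fix x y assume "x \<in> \<Union>C" "y \<in> \<Union>C"
  then obtain X Y where X: "X \<in> C" "x \<in> X" and Y: "Y \<in> C" "y \<in> Y" by blast
  from chain[OF X(1) Y(1)] obtain Z where "Z \<in> C" "x \<in> Z" "y \<in> Z"
    using X Y by blast
  then show "x + y \<in> \<Union>C" using ideals left_ideal_add by blast
next
  fix x assume "x \<in> \<Union>C"
  then obtain X where "X \<in> C" "x \<in> X" by blast
  then show "- x \<in> \<Union>C" using ideals unfolding left_ideal_def by blast
next
  fix r x assume "x \<in> \<Union>C"
  then obtain X where "X \<in> C" "x \<in> X" by blast
  then show "r * x \<in> \<Union>C" using ideals left_ideal_mult_left by blast
qed

lemma maximal_left_ideal_containing:
  fixes I :: "'a::ring_1 set"
  assumes "left_ideal I" and "1 \<notin> I"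
  shows "\<exists>M. maximal_left_ideal M \<and> I \<subseteq> M"
proof -
  let ?A = "{K::'a set. left_ideal K \<and> I \<subseteq> K \<and> 1 \<notin> K}"
  have "\<exists>M\<in>?A. \<forall>X\<in>?A. M \<subseteq> X \<longrightarrow> X = M"
  proof (rule subset_Zorn_nonempty)
    show "?A \<noteq> {}" using assms by blast
  next
    fix C assume "C \<noteq> {}" and "subset.chain ?A C"
    then have "C \<subseteq> ?A" and "\<And>X Y. X \<in> C \<Longrightarrow> Y \<in> C \<Longrightarrow> X \<subseteq> Y \<or> Y \<subseteq> X"
      unfolding subset_chain_def by blast+
    with \<open>C \<noteq> {}\<close> show "\<Union>C \<in> ?A"
      using left_ideal_Union_chain[of C] by auto
  qed
  then obtain M where M: "left_ideal M" "I \<subseteq> M" "1 \<notin> M"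
    and max: "\<And>K. left_ideal K \<Longrightarrow> M \<subseteq> K \<Longrightarrow> 1 \<notin> K \<Longrightarrow> K = M" by auto
  have "maximal_left_ideal M"
    unfolding maximal_left_ideal_def
  proof (intro conjI allI impI)
    show "M \<noteq> UNIV" using M(3) by blast
  next
    fix K assume "left_ideal K \<and> M \<subseteq> K \<and> K \<noteq> UNIV"
    then show "K = M" using max left_ideal_eq_UNIV_iff by blast
  qed (rule M(1))
  with M(2) show ?thesis by blast
qed

lemma left_ideal_jacobson: "left_ideal (jacobson :: 'a::ring_1 set)"
  unfolding jacobson_def left_ideal_def maximal_left_ideal_def by auto

lemma left_ideal_principal: "left_ideal (range (\<lambda>r. r * (a::'a::ring_1)))"
  unfolding left_ideal_def
proof (intro conjI ballI allI)
  show "0 \<in> range (\<lambda>r. r * a)" by (rule range_eqI[of _ _ 0]) simp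
next
  fix x y assume "x \<in> range (\<lambda>r. r * a)" "y \<in> range (\<lambda>r. r * a)"
  then obtain r s where "x = r * a" "y = s * a" by blast
  then show "x + y \<in> range (\<lambda>r. r * a)" by (simp add: rangeI flip: distrib_right)
next
  fix x assume "x \<in> range (\<lambda>r. r * a)"
  then obtain r where "x = r * a" by blast
  then show "- x \<in> range (\<lambda>r. r * a)" by (simp add: range_eqI[of _ _ "- r"])
next
  fix s x assume "x \<in> range (\<lambda>r. r * a)"
  then obtain r where "x = r * a" by blast
  then show "s * x \<in> range (\<lambda>r. r * a)" by (simp add: rangeI flip: mult.assoc)
qed

lemma jacobson_left_invertible:
  fixes j :: "'a::ring_1"
  assumes "j \<in> jacobson"
  shows "\<exists>b. b * (1 - j) = 1"
proof (rule ccontr)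
  assume "\<nexists>b. b * (1 - j) = 1"
  then have "1 \<notin> range (\<lambda>r. r * (1 - j))" by (metis rangeE)
  then obtain M where M: "maximal_left_ideal M" "range (\<lambda>r. r * (1 - j)) \<subseteq> M"
    using maximal_left_ideal_containing[OF left_ideal_principal] by blast
  have ideal: "left_ideal M" using M(1) unfolding maximal_left_ideal_def by simp
  have "j \<in> M" using assms M(1) unfolding jacobson_def by blast
  moreover have "1 - j \<in> M" using M(2) by (metis mult_1 rangeI subsetD)
  ultimately have "(1 - j) + j \<in> M" using left_ideal_add[OF ideal] by blast
  then have "M = UNIV" using left_ideal_eq_UNIV_iff[OF ideal] by simp
  then show False using M(1) unfolding maximal_left_ideal_def by blast
qed

text \<open>The left inverse \<open>b\<close> of \<open>1 - j\<close> is itself of the form \<open>1 - j'\<close> with \<open>j' = -bj \<in> J(R)\<close>,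
  so it has a left inverse too, which must then be \<open>1 - j\<close>.\<close>
lemma ring_unit_one_minus_jacobson:
  fixes j :: "'a::ring_1"
  assumes j: "j \<in> jacobson"
  shows "ring_unit (1 - j)"
proof -
  obtain b where b: "b * (1 - j) = 1" using jacobson_left_invertible[OF j] by blast
  have "- (b * j) \<in> jacobson"
    using left_ideal_mult_left[OF left_ideal_jacobson j, of "- b"] by simp
  moreover have "b = 1 - (- (b * j))" using b by (simp add: algebra_simps)
  ultimately obtain c where c: "c * b = 1" using jacobson_left_invertible by metis
  have "c = c * (b * (1 - j))" using b by simp
  also have "\<dots> = 1 - j" using c by (simp add: mult.assoc[symmetric])
  finally have "(1 - j) * b = 1" using c by simp
  with b show ?thesis unfolding ring_unit_def by blast
qed

lemma ring_unit_add_jacobson: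
  fixes v j :: "'a::ring_1"
  assumes v: "ring_unit v" and j: "j \<in> jacobson"
  shows "ring_unit (v + j)"
proof -
  obtain w where w: "v * w = 1" "w * v = 1" using v unfolding ring_unit_def by blast
  have "- (w * j) \<in> jacobson"
    using left_ideal_mult_left[OF left_ideal_jacobson j, of "- w"] by simp
  then obtain z where z: "(1 + w * j) * z = 1" "z * (1 + w * j) = 1"
    using ring_unit_one_minus_jacobson unfolding ring_unit_def by fastforce
  have eq: "v + j = v * (1 + w * j)"
    by (simp add: distrib_left mult.assoc[symmetric] w)
  have "(v + j) * (z * w) = 1" unfolding eq by (metis mult.assoc z(1) w(1) mult_1_right)
  moreover have "(z * w) * (v + j) = 1" unfolding eq by (metis mult.assoc z(2) w(2) mult_1_left)
  ultimately show ?thesis unfolding ring_unit_def by blast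
qed

lemma idempotent_ring_unit_eq_one:
  fixes f :: "'a::ring_1"
  assumes "f * f = f" and "ring_unit f"
  shows "f = 1"
proof -
  obtain g where "g * f = 1" using assms(2) unfolding ring_unit_def by blast
  then have "g * (f * f) = 1" using assms(1) by simp
  with \<open>g * f = 1\<close> show ?thesis by (simp add: mult.assoc[symmetric])
qed

lemma involution_one_minus:
  assumes "involution st"
  shows "st (1 - x) = 1 - st x"
proof -
  have add: "st (a + b) = st a + st b" and mult: "st (a * b) = st b * st a" and inv: "st (st a) = a"
    for a b using assms unfolding involution_def by blast+
  have "1 = st (st 1 * 1)" using inv by simp
  also have "\<dots> = st 1" using mult[of "st 1" 1] inv by simp
  finally have "st 1 = 1" by simp
  moreover have "st (1 - x) + st x = st 1" using add[of "1 - x" x] by simp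
  ultimately show ?thesis by (simp add: eq_diff_eq)
qed

lemma projection_one_minus:
  assumes "involution st" and "projection st e"
  shows "projection st (1 - e)"
  using assms(2) involution_one_minus[OF assms(1), of e]
  unfolding projection_def by (simp add: algebra_simps)

lemma strongly_J_star_clean_imp_strongly_star_clean:
  assumes "strongly_J_star_clean st"
  shows "strongly_star_clean st"
  unfolding strongly_star_clean_def
proof
  fix a
  obtain e u where eu: "a - 1 = e + u" "projection st e" "u \<in> jacobson"
    "(a - 1) * e = e * (a - 1)"
    using assms unfolding strongly_J_star_clean_def by blast
  have "- u \<in> jacobson"
    using left_ideal_mult_left[OF left_ideal_jacobson eu(3), of "- 1"] by simp
  then have "ring_unit (1 - - u)" by (rule ring_unit_one_minus_jacobson)
  moreover have "e * u = u * e"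
    using eu(1,2,4) unfolding projection_def by (simp add: algebra_simps)
  moreover have "a = e + (1 + u)" using eu(1) by (simp add: algebra_simps)
  ultimately show "\<exists>e u. a = e + u \<and> projection st e \<and> ring_unit u \<and> e * u = u * e"
    using eu(2) by (intro exI[of _ e] exI[of _ "1 + u"]) (simp add: algebra_simps)
qed

lemma strongly_J_star_clean_jacobson_eq:
  fixes st :: "'a::ring_1 \<Rightarrow> 'a"
  assumes "strongly_J_star_clean st"
  shows "(jacobson :: 'a set) = {x. ring_unit (1 - x)}"
proof (intro set_eqI iffI)
  fix x :: 'a assume "x \<in> jacobson"
  then show "x \<in> {x. ring_unit (1 - x)}" using ring_unit_one_minus_jacobson by blast
next
  fix x :: 'a assume "x \<in> {x. ring_unit (1 - x)}"
  moreover obtain e u where eu: "x = e + u" "projection st e" "u \<in> jacobson"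
    using assms unfolding strongly_J_star_clean_def by blast
  ultimately have "ring_unit ((1 - x) + u)" using ring_unit_add_jacobson by blast
  moreover have "(1 - x) + u = 1 - e" using eu(1) by simp
  moreover have "(1 - e) * (1 - e) = 1 - e"
    using eu(2) unfolding projection_def by (simp add: algebra_simps)
  ultimately have "e = 0" using idempotent_ring_unit_eq_one by fastforce
  with eu show "x \<in> jacobson" by simp
qed

lemma strongly_star_clean_imp_strongly_J_star_clean:
  fixes st :: "'a::ring_1 \<Rightarrow> 'a"
  assumes inv: "involution st" and clean: "strongly_star_clean st"
    and quasi: "(jacobson :: 'a set) = {x. ring_unit (1 - x)}"
  shows "strongly_J_star_clean st"
  unfolding strongly_J_star_clean_def
proof
  fix a :: 'a
  obtain f w where fw: "a = f + w" "projection st f" "ring_unit w" "f * w = w * f"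
    using clean unfolding strongly_star_clean_def by blast
  have "(2::'a) \<in> jacobson" using quasi unfolding ring_unit_def by (auto intro!: exI[of _ "-1"])
  moreover have "1 - w \<in> jacobson" using fw(3) by (simp add: quasi)
  ultimately have "f * 2 - (1 - w) \<in> jacobson"
    using left_ideal_diff[OF left_ideal_jacobson] left_ideal_mult_left[OF left_ideal_jacobson] by blast
  moreover have "a = (1 - f) + (f * 2 - (1 - w))" using fw(1) by (simp add: algebra_simps mult_2_right)
  moreover have "a * (1 - f) = (1 - f) * a"
    using fw(1,2,4) unfolding projection_def by (simp add: algebra_simps)
  ultimately show "\<exists>e u. a = e + u \<and> projection st e \<and> u \<in> jacobson \<and> a * e = e * a"
    using projection_one_minus[OF inv fw(2)] by blast
qed

theorem theorem3p4:
  fixes st :: "'a::ring_1 \<Rightarrow> 'a"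
  assumes "involution st"
  shows "strongly_J_star_clean st \<longleftrightarrow>
           (strongly_star_clean st \<and> (jacobson :: 'a set) = {x. ring_unit (1 - x)})"
  using assms strongly_J_star_clean_imp_strongly_star_clean strongly_J_star_clean_jacobson_eq
    strongly_star_clean_imp_strongly_J_star_clean
  by blast

end
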